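(* The class of context-free languages is not closed under ${\rm bdi}$; for instance, for $L=\{0^m1^m2^{2n}3^{4n}:m,n\ge1\}$ one has ${\rm bdi}(L)\cap(03)^+(13)^+(23)^+=\{(03)^n(13)^n(23)^{2n}:n\ge1\}$, so ${\rm bdi}(L)$ is not context-free.
   Context: For a word $w=a_1\cdots a_n$, ${\rm fh}(w)=a_1\cdots a_{\lfloor n/2\rfloor}$ and ${\rm lh}(w)=a_{\lfloor n/2\rfloor+1}\cdots a_n$. For words $x=a_1\cdots a_m$ and $y=b_1\cdots b_m$ the perfect shuffle is $x\,\text{sh}\,y=a_1b_1\cdots a_mb_m$, and if $y=b_1\cdots b_{m+1}$ has length $m+1$ then $x\,\text{sh}\,y=a_1b_1\cdots a_mb_mb_{m+1}$. ${\rm bdi}(w)={\rm fh}(w)\,\text{sh}\,{\rm lh}(w)$ and ${\rm bdi}(L)=\{{\rm bdi}(w):w\in L\}$. *)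

theory Defs
  imports Main
begin

(* Context-free grammars: productions map a nonterminal (nat) to a string of
   nonterminals (Inl) and terminals (Inr). *)
type_synonym ('n, 't) prods = "('n \<times> ('n + 't) list) set"

inductive derive1 :: "('n, 't) prods \<Rightarrow> ('n + 't) list \<Rightarrow> ('n + 't) list \<Rightarrow> bool"
  for P where
  "(A, rhs) \<in> P \<Longrightarrow> derive1 P (u @ [Inl A] @ v) (u @ rhs @ v)"

definition derives :: "('n, 't) prods \<Rightarrow> ('n + 't) list \<Rightarrow> ('n + 't) list \<Rightarrow> bool" where
  "derives P = (derive1 P)\<^sup>*\<^sup>*"

definition cfg_lang :: "('n, 't) prods \<Rightarrow> 'n \<Rightarrow> 't list set" where
  "cfg_lang P S = {w. derives P [Inl S] (map Inr w)}"

definition context_free :: "'t list set \<Rightarrow> bool" where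
  "context_free L \<longleftrightarrow> (\<exists>(P :: (nat, 't) prods) S. finite P \<and> L = cfg_lang P S)"

definition fh :: "'a list \<Rightarrow> 'a list" where
  "fh w = take (length w div 2) w"

definition lh :: "'a list \<Rightarrow> 'a list" where
  "lh w = drop (length w div 2) w"

(* perfect shuffle; used only when length y = length x or length x + 1 *)
fun psh :: "'a list \<Rightarrow> 'a list \<Rightarrow> 'a list" where
  "psh (a # xs) (b # ys) = a # b # psh xs ys"
| "psh [] ys = ys"
| "psh xs [] = xs"

definition bdi :: "'a list \<Rightarrow> 'a list" where
  "bdi w = psh (fh w) (lh w)"

definition bdi_lang :: "'a list set \<Rightarrow> 'a list set" where
  "bdi_lang L = bdi ` L"

definition pow :: "'a list \<Rightarrow> nat \<Rightarrow> 'a list" where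
  "pow u n = concat (replicate n u)"

end

theory Submission
  imports Defs
begin

(* For w = bdi (word N N) = (03)^N (13)^N (23)^(2N) these facts show that no pumped-down
   word lies in bdi(L), since matching letter counts would require the window to touch
   both the 0s and the 2s, or to change a letter that bdi(L) forces. *)

datatype ('n, 't) tree = Leaf 't | Node 'n "('n, 't) tree list"

fun root :: "('n, 't) tree \<Rightarrow> 'n + 't" where
  "root (Leaf a) = Inr a"
| "root (Node A ts) = Inl A"

fun yield :: "('n, 't) tree \<Rightarrow> 't list" where
  "yield (Leaf a) = [a]"
| "yield (Node A ts) = concat (map yield ts)"

fun parse_tree :: "('n, 't) prods \<Rightarrow> ('n, 't) tree \<Rightarrow> bool" where
  "parse_tree P (Leaf a) = True"
| "parse_tree P (Node A ts) = ((A, map root ts) \<in> P \<and> (\<forall>t \<in> set ts. parse_tree P t))"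

fun height :: "('n, 't) tree \<Rightarrow> nat" where
  "height (Leaf a) = 0"
| "height (Node A ts) = Suc (Max (insert 0 (height ` set ts)))"

inductive subtree :: "('n, 't) tree \<Rightarrow> ('n, 't) tree \<Rightarrow> bool" where
  subtree_refl: "subtree t t"
| subtree_child: "subtree s t \<Longrightarrow> t \<in> set ts \<Longrightarrow> subtree s (Node A ts)"

lemma height_child: "t \<in> set ts \<Longrightarrow> height t < height (Node A ts)"
  by (simp add: le_imp_less_Suc)

lemma tallest_child:
  assumes "ts \<noteq> []"
  obtains t where "t \<in> set ts" "height (Node A ts) = Suc (height t)"
proof -
  have "Max (insert 0 (height ` set ts)) = Max (height ` set ts)"
    using assms by (simp add: Max_insert)
  moreover have "Max (height ` set ts) \<in> height ` set ts"
    using assms by (intro Max_in) auto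
  ultimately show thesis using that by auto
qed

lemma subtree_trans: "subtree s t \<Longrightarrow> subtree r s \<Longrightarrow> subtree r t"
  by (induction s t rule: subtree.induct) (auto intro: subtree.intros)

lemma subtree_yield: "subtree s t \<Longrightarrow> \<exists>u y. yield t = u @ yield s @ y"
proof (induction rule: subtree.induct)
  case (subtree_refl t)
  show ?case by (intro exI[of _ "[]"]) simp
next
  case (subtree_child s t ts A)
  then obtain u y where "yield t = u @ yield s @ y" by blast
  moreover obtain ts1 ts2 where "ts = ts1 @ t # ts2"
    using subtree_child(2) by (meson split_list)
  ultimately show ?case
    by (intro exI[of _ "concat (map yield ts1) @ u"] exI[of _ "y @ concat (map yield ts2)"]) simp
qed

lemma subtree_parse_tree: "subtree s t \<Longrightarrow> parse_tree P t \<Longrightarrow> parse_tree P s"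
  by (induction rule: subtree.induct) auto

lemma subtree_height: "subtree s t \<Longrightarrow> height s \<le> height t"
  by (induction rule: subtree.induct) (auto dest: height_child)

lemma subtree_size: "subtree s t \<Longrightarrow> size s \<le> size t"
  by (induction rule: subtree.induct) (auto intro: le_SucI size_list_estimation')

lemma replace_subtree:
  assumes "subtree s t" "parse_tree P t" "parse_tree P s'" "root s' = root s" "size s' < size s"
  shows "\<exists>t' u y. parse_tree P t' \<and> root t' = root t \<and> size t' < size t
           \<and> yield t = u @ yield s @ y \<and> yield t' = u @ yield s' @ y"
  using assms
proof (induction rule: subtree.induct)
  case (subtree_refl t)
  then show ?case by (intro exI[of _ s'] exI[of _ "[]"]) simp
next
  case (subtree_child s t ts A)
  then obtain t' u y where IH: "parse_tree P t'" "root t' = root t" "size t' < size t"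
      "yield t = u @ yield s @ y" "yield t' = u @ yield s' @ y"
    by auto
  obtain ts1 ts2 where ts: "ts = ts1 @ t # ts2"
    using subtree_child(2) by (meson split_list)
  show ?case
  proof (intro exI conjI)
    show "parse_tree P (Node A (ts1 @ t' # ts2))"
      using IH subtree_child.prems ts by auto
    show "root (Node A (ts1 @ t' # ts2)) = root (Node A ts)"
      by simp
    show "size (Node A (ts1 @ t' # ts2)) < size (Node A ts)"
      using IH ts by simp
    show "yield (Node A ts) = (concat (map yield ts1) @ u) @ yield s @ y @ concat (map yield ts2)"
      using IH ts by simp
    show "yield (Node A (ts1 @ t' # ts2)) = (concat (map yield ts1) @ u) @ yield s' @ y @ concat (map yield ts2)"
      using IH by simp
  qed
qed

lemma subtree_of_height: "Suc h \<le> height t \<Longrightarrow> \<exists>s. subtree s t \<and> height s = Suc h"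
proof (induction t)
  case (Leaf a)
  then show ?case by simp
next
  case (Node A ts)
  show ?case
  proof (cases "height (Node A ts) = Suc h")
    case True
    then show ?thesis by (auto intro: subtree_refl)
  next
    case False
    with Node.prems have "ts \<noteq> []" by auto
    then obtain t where t: "t \<in> set ts" "height (Node A ts) = Suc (height t)"
      by (rule tallest_child)
    with Node.prems False have "Suc h \<le> height t" by simp
    with Node.IH[OF t(1)] t(1) show ?thesis by (auto intro: subtree_child)
  qed
qed

(* Pigeonhole along a longest path: if the height exceeds the number of available
   nonterminals, some node has a proper descendant with the same nonterminal. *)
lemma repeated_label:
  assumes "finite N" "\<forall>B ts. subtree (Node B ts) r \<longrightarrow> B \<in> N" "card N < height r"
  shows "\<exists>A ts t s. subtree (Node A ts) r \<and> t \<in> set ts \<and> subtree s t \<and> root s = Inl A"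
  using assms
proof (induction r arbitrary: N)
  case (Leaf a)
  then show ?case by simp
next
  case (Node A ts)
  have "A \<in> N" using Node.prems(2) subtree_refl by blast
  then have N_pos: "0 < card N" using Node.prems(1) card_gt_0_iff by blast
  then have "ts \<noteq> []" using Node.prems(3) by (cases ts) auto
  then obtain t where t: "t \<in> set ts" "height (Node A ts) = Suc (height t)"
    by (rule tallest_child)
  show ?case
  proof (cases "\<exists>s. subtree s t \<and> root s = Inl A")
    case True
    then show ?thesis using t(1) by (blast intro: subtree_refl)
  next
    case False
    have "\<forall>B ts'. subtree (Node B ts') t \<longrightarrow> B \<in> N - {A}"
      using False Node.prems(2) t(1) by (force intro: subtree_child)
    moreover have "card (N - {A}) < height t"
      using Node.prems(1,3) \<open>A \<in> N\<close> N_pos t(2) by simp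
    ultimately obtain A' ts' t' s where "subtree (Node A' ts') t" "t' \<in> set ts'"
        "subtree s t'" "root s = Inl A'"
      using Node.IH[OF t(1)] Node.prems(1) by blast
    then show ?thesis using t(1) by (blast intro: subtree_child)
  qed
qed

lemma yield_length_bound:
  assumes "\<forall>B ts. subtree (Node B ts) t \<longrightarrow> length ts \<le> k" "1 \<le> k"
  shows "length (yield t) \<le> k ^ height t"
  using assms
proof (induction t)
  case (Leaf a)
  then show ?case by simp
next
  case (Node A ts)
  let ?h = "Max (insert 0 (height ` set ts))"
  have "length (yield t) \<le> k ^ ?h" if t: "t \<in> set ts" for t
  proof -
    have "length (yield t) \<le> k ^ height t"
      using Node.IH[OF t] Node.prems t by (auto intro: subtree_child)
    also have "\<dots> \<le> k ^ ?h"
      using Node.prems(2) t by (intro power_increasing) auto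
    finally show ?thesis .
  qed
  then have "length (yield (Node A ts)) \<le> (\<Sum>t\<leftarrow>ts. k ^ ?h)"
    by (simp add: length_concat comp_def sum_list_mono)
  also have "\<dots> = length ts * k ^ ?h"
    by (simp add: sum_list_triv)
  also have "\<dots> \<le> k * k ^ ?h"
    using Node.prems(1) subtree_refl by (auto intro: mult_right_mono)
  finally show ?case by simp
qed

lemma derives_context: "derives P a b \<Longrightarrow> derives P (c @ a @ d) (c @ b @ d)"
  unfolding derives_def
proof (induction rule: rtranclp_induct)
  case (step b b')
  from step(2) have "derive1 P (c @ b @ d) (c @ b' @ d)"
  proof (cases rule: derive1.cases)
    case (1 A rhs u v)
    then show ?thesis using derive1.intros[of A rhs P "c @ u" "v @ d"] by simp
  qed
  with step(3) show ?case by simp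
qed simp

lemma derives_append: "derives P a b \<Longrightarrow> derives P c d \<Longrightarrow> derives P (a @ c) (b @ d)"
  using derives_context[of P a b "[]" c] derives_context[of P c d b "[]"]
  unfolding derives_def by simp

lemma parse_tree_derives: "parse_tree P t \<Longrightarrow> derives P [root t] (map Inr (yield t))"
proof (induction t)
  case (Leaf a)
  show ?case by (simp add: derives_def)
next
  case (Node A ts)
  have "derives P (map root ts) (map Inr (concat (map yield ts)))"
  proof -
    from Node have "\<forall>t \<in> set ts. derives P [root t] (map Inr (yield t))" by simp
    then show ?thesis
    proof (induction ts)
      case (Cons t ts)
      then have "derives P ([root t] @ map root ts) (map Inr (yield t) @ map Inr (concat (map yield ts)))"
        by (intro derives_append) auto
      then show ?case by simp
    qed (simp add: derives_def)
  qed
  moreover have "derive1 P [Inl A] (map root ts)"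
    using Node.prems derive1.intros[of A "map root ts" P "[]" "[]"] by simp
  ultimately show ?case by (simp add: derives_def)
qed

lemma derives_forest:
  "derives P a (map Inr w) \<Longrightarrow>
     \<exists>ts. (\<forall>t \<in> set ts. parse_tree P t) \<and> map root ts = a \<and> concat (map yield ts) = w"
  unfolding derives_def
proof (induction rule: converse_rtranclp_induct)
  case base
  show ?case by (rule exI[of _ "map Leaf w"]) (simp add: comp_def)
next
  case (step a b)
  then obtain ts where ts: "\<forall>t \<in> set ts. parse_tree P t" "map root ts = b" "concat (map yield ts) = w"
    by blast
  from step(1) obtain A rhs u v where d: "(A, rhs) \<in> P" "a = u @ [Inl A] @ v" "b = u @ rhs @ v"
    by (cases rule: derive1.cases) auto
  from ts(2) d(3) have "map root ts = u @ (rhs @ v)" by simp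
  from map_eq_append_conv[THEN iffD1, OF this] obtain ts1 ts' where
    "ts = ts1 @ ts'" "u = map root ts1" "rhs @ v = map root ts'" by blast
  moreover from map_eq_append_conv[THEN iffD1, OF this(3)[symmetric]] obtain ts2 ts3 where
    "ts' = ts2 @ ts3" "rhs = map root ts2" "v = map root ts3" by blast
  ultimately have split: "ts = ts1 @ ts2 @ ts3" "map root ts1 = u" "map root ts2 = rhs" "map root ts3 = v"
    by simp_all
  have "\<forall>t \<in> set (ts1 @ [Node A ts2] @ ts3). parse_tree P t"
    using ts(1) split(1,3) d(1) by auto
  moreover have "map root (ts1 @ [Node A ts2] @ ts3) = a"
    using split d(2) by simp
  moreover have "concat (map yield (ts1 @ [Node A ts2] @ ts3)) = w"
    using split(1) ts(3) by simp
  ultimately show ?case by blast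
qed

lemma cfg_lang_iff_parse_tree:
  "w \<in> cfg_lang P S \<longleftrightarrow> (\<exists>t. parse_tree P t \<and> root t = Inl S \<and> yield t = w)"
proof
  assume "w \<in> cfg_lang P S"
  then have "derives P [Inl S] (map Inr w)" unfolding cfg_lang_def by simp
  from derives_forest[OF this] obtain ts where
    ts: "\<forall>t \<in> set ts. parse_tree P t" "map root ts = [Inl S]" "concat (map yield ts) = w"
    by (elim exE conjE)
  from ts(2) obtain t where "ts = [t]" by (cases ts; cases "tl ts"; simp)
  with ts show "\<exists>t. parse_tree P t \<and> root t = Inl S \<and> yield t = w" by auto
next
  assume "\<exists>t. parse_tree P t \<and> root t = Inl S \<and> yield t = w"
  then obtain t where "parse_tree P t" "root t = Inl S" "yield t = w" by (elim exE conjE)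
  then show "w \<in> cfg_lang P S"
    using parse_tree_derives[of P t] unfolding cfg_lang_def by simp
qed

lemma parse_tree_node: "parse_tree P t \<Longrightarrow> subtree (Node B ts) t \<Longrightarrow> (B, map root ts) \<in> P"
  using subtree_parse_tree[of "Node B ts" t P] by simp

(* In a tree of height above card N there is a subtree r with a proper subtree s
   carrying the same nonterminal, where r itself is low and hence has a short yield. *)
lemma short_repetition:
  assumes "finite N" "1 \<le> k" "card N < height t"
    and labels: "\<forall>B ts. subtree (Node B ts) t \<longrightarrow> B \<in> N"
    and arity: "\<forall>B ts. subtree (Node B ts) t \<longrightarrow> length ts \<le> k"
  shows "\<exists>r s. subtree r t \<and> subtree s r \<and> root s = root r \<and> size s < size r
           \<and> length (yield r) \<le> k ^ Suc (card N)"
proof -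
  obtain r0 where r0: "subtree r0 t" "height r0 = Suc (card N)"
    using subtree_of_height assms(3) by (metis Suc_leI)
  have "\<forall>B ts. subtree (Node B ts) r0 \<longrightarrow> B \<in> N"
    using labels r0(1) subtree_trans by blast
  then obtain A ts c s where rep: "subtree (Node A ts) r0" "c \<in> set ts" "subtree s c" "root s = Inl A"
    using repeated_label[OF assms(1)] r0(2) by force
  let ?r = "Node A ts"
  have "subtree ?r t" using r0(1) rep(1) by (rule subtree_trans)
  moreover have "subtree s ?r" using rep(3,2) by (rule subtree_child)
  moreover have "size s < size ?r"
    using size_list_estimation'[of c ts "size s" size] rep(2) subtree_size[OF rep(3)] by simp
  moreover have "length (yield ?r) \<le> k ^ Suc (card N)"
  proof -
    have "length (yield ?r) \<le> k ^ height ?r"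
      using yield_length_bound[OF _ assms(2)] arity \<open>subtree ?r t\<close> subtree_trans by blast
    also have "\<dots> \<le> k ^ Suc (card N)"
      using subtree_height[OF rep(1)] r0(2) assms(2) by (simp add: power_increasing)
    finally show ?thesis .
  qed
  ultimately show ?thesis
    using rep(4) by (intro exI[of _ ?r] exI[of _ s]) simp
qed

lemma minimal_parse_tree:
  assumes "z \<in> cfg_lang P S"
  obtains t where "parse_tree P t" "root t = Inl S" "yield t = z"
    "\<And>t'. parse_tree P t' \<Longrightarrow> root t' = Inl S \<Longrightarrow> yield t' = z \<Longrightarrow> size t \<le> size t'"
proof -
  let ?Q = "\<lambda>t. parse_tree P t \<and> root t = Inl S \<and> yield t = z"
  obtain t0 where "?Q t0"
    using assms unfolding cfg_lang_iff_parse_tree by blast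
  then obtain t where "?Q t" "\<And>t'. ?Q t' \<Longrightarrow> size t \<le> size t'"
    using ex_has_least_nat[of ?Q t0 size] by blast
  then show thesis using that by blast
qed

lemma parse_tree_bounds:
  assumes "finite P"
  obtains N k where "finite N" "1 \<le> k"
    "\<And>t. parse_tree P t \<Longrightarrow> \<forall>B ts. subtree (Node B ts) t \<longrightarrow> B \<in> N"
    "\<And>t. parse_tree P t \<Longrightarrow> \<forall>B ts. subtree (Node B ts) t \<longrightarrow> length ts \<le> k"
proof
  let ?k = "Max (insert 1 (length ` snd ` P))"
  show "finite (fst ` P)" "1 \<le> ?k" using assms by simp_all
  show "\<forall>B ts. subtree (Node B ts) t \<longrightarrow> B \<in> fst ` P" if "parse_tree P t" for t
    using parse_tree_node[OF that] by force
  show "\<forall>B ts. subtree (Node B ts) t \<longrightarrow> length ts \<le> ?k" if "parse_tree P t" for t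
  proof (intro allI impI)
    fix B ts assume "subtree (Node B ts) t"
    then have "length (map root ts) \<in> length ` snd ` P"
      using parse_tree_node[OF that] by force
    then have "length (map root ts) \<le> ?k"
      using assms by (intro Max_ge) auto
    then show "length ts \<le> ?k" by simp
  qed
qed

(* The witness tree is chosen of minimal size, which forces v x to be nonempty. *)
theorem pumping_down:
  fixes P :: "('n, 't) prods"
  assumes "finite P"
  shows "\<exists>p. \<forall>z \<in> cfg_lang P S. p < length z \<longrightarrow>
           (\<exists>u v w x y. z = u @ v @ w @ x @ y \<and> v @ x \<noteq> [] \<and> length (v @ w @ x) \<le> p
                         \<and> u @ w @ y \<in> cfg_lang P S)"
proof -
  obtain N k where "finite N" "1 \<le> k"
    and labels: "\<And>t. parse_tree P t \<Longrightarrow> \<forall>B ts. subtree (Node B ts) t \<longrightarrow> B \<in> N"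
    and arity: "\<And>t. parse_tree P t \<Longrightarrow> \<forall>B ts. subtree (Node B ts) t \<longrightarrow> length ts \<le> k"
    using parse_tree_bounds[OF assms] by blast
  show ?thesis
  proof (intro exI[of _ "k ^ Suc (card N)"] ballI impI)
    fix z assume "z \<in> cfg_lang P S" and long: "k ^ Suc (card N) < length z"
    from \<open>z \<in> cfg_lang P S\<close> obtain t where t: "parse_tree P t" "root t = Inl S" "yield t = z"
      and minimal: "\<And>t'. parse_tree P t' \<Longrightarrow> root t' = Inl S \<Longrightarrow> yield t' = z \<Longrightarrow> size t \<le> size t'"
      by (rule minimal_parse_tree) blast
    have "card N < height t"
    proof (rule ccontr)
      assume "\<not> card N < height t"
      have "length z \<le> k ^ height t"
        using yield_length_bound[OF arity \<open>1 \<le> k\<close>] t by blast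
      also have "\<dots> \<le> k ^ Suc (card N)"
        using \<open>\<not> card N < height t\<close> \<open>1 \<le> k\<close> by (intro power_increasing) auto
      finally show False using long by simp
    qed
    then obtain r s where rs: "subtree r t" "subtree s r" "root s = root r" "size s < size r"
        "length (yield r) \<le> k ^ Suc (card N)"
      using short_repetition[OF \<open>finite N\<close> \<open>1 \<le> k\<close>] labels arity t by blast
    obtain v x where r: "yield r = v @ yield s @ x"
      using subtree_yield[OF rs(2)] by blast
    have "parse_tree P s"
      using t(1) subtree_parse_tree[OF rs(1)] subtree_parse_tree[OF rs(2)] by blast
    from replace_subtree[OF rs(1) t(1) this rs(3,4)]
    obtain t' u y where t': "parse_tree P t'" "root t' = root t" "size t' < size t"
        "yield t = u @ yield r @ y" "yield t' = u @ yield s @ y"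
      by (elim exE conjE)
    have "v @ x \<noteq> []"
      using minimal[of t'] t t' r by auto
    moreover have "u @ yield s @ y \<in> cfg_lang P S"
      using t t' unfolding cfg_lang_iff_parse_tree by auto
    ultimately show "\<exists>u v w x y. z = u @ v @ w @ x @ y \<and> v @ x \<noteq> []
        \<and> length (v @ w @ x) \<le> k ^ Suc (card N) \<and> u @ w @ y \<in> cfg_lang P S"
      using t t'(4) r rs(5) by (intro exI[of _ u] exI[of _ v] exI[of _ "yield s"] exI[of _ x] exI[of _ y]) auto
  qed
qed

corollary context_free_pumping_down:
  fixes L :: "'t list set"
  assumes "context_free L"
  obtains p where "\<forall>z \<in> L. p < length z \<longrightarrow>
    (\<exists>u v w x y. z = u @ v @ w @ x @ y \<and> v @ x \<noteq> [] \<and> length (v @ w @ x) \<le> p \<and> u @ w @ y \<in> L)"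
proof -
  obtain P :: "(nat, 't) prods" and S where "finite P" "L = cfg_lang P S"
    using assms unfolding context_free_def by blast
  from pumping_down[OF \<open>finite P\<close>, of S] obtain p where "\<forall>z \<in> cfg_lang P S. p < length z \<longrightarrow>
    (\<exists>u v w x y. z = u @ v @ w @ x @ y \<and> v @ x \<noteq> [] \<and> length (v @ w @ x) \<le> p
                  \<and> u @ w @ y \<in> cfg_lang P S)"
    by (elim exE)
  with \<open>L = cfg_lang P S\<close> show thesis by (intro that) simp
qed

lemma pow_0 [simp]: "pow u 0 = []"
  unfolding pow_def by simp

lemma pow_Suc: "pow u (Suc k) = u @ pow u k"
  unfolding pow_def by simp

lemma pow_Suc_right: "pow u (Suc k) = pow u k @ u"
  unfolding pow_def by (induction k) auto

lemma pow_replicate: "pow (replicate k c) n = replicate (k * n) c"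
  by (induction n) (simp_all add: pow_Suc_right replicate_add[symmetric])

lemma pow_singleton: "pow [c] n = replicate n c"
  using pow_replicate[of 1 c n] by simp

lemma length_pow: "length (pow u k) = k * length u"
  by (induction k) (simp_all add: pow_Suc)

lemma set_pow: "set (pow u k) \<subseteq> set u"
  unfolding pow_def by auto

lemma count_list_pow: "count_list (pow u k) c = k * count_list u c"
  by (induction k) (simp_all add: pow_Suc)

lemma count_list_psh: "count_list (psh xs ys) c = count_list xs c + count_list ys c"
  by (induction xs ys rule: psh.induct) auto

lemma psh_append: "length xs = length ys \<Longrightarrow> psh (xs @ xs') (ys @ ys') = psh xs ys @ psh xs' ys'"
  by (induction xs ys rule: list_induct2) auto

lemma psh_replicate: "psh (replicate k a) (replicate k b) = pow [a, b] k"
  by (induction k) (simp_all add: pow_Suc)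

lemma length_psh: "length (psh xs ys) = length xs + length ys"
  by (induction xs ys rule: psh.induct) auto

lemma length_bdi: "length (bdi w) = length w"
  unfolding bdi_def fh_def lh_def by (simp add: length_psh)

lemma count_list_bdi: "count_list (bdi w) c = count_list w c"
  using count_list_append[of "fh w" "lh w" c]
  unfolding bdi_def fh_def lh_def by (simp add: count_list_psh)

lemma bdi_nth_1:
  assumes "2 \<le> length w"
  shows "bdi w ! 1 = w ! (length w div 2)"
proof -
  have "fh w \<noteq> []" "lh w \<noteq> []" using assms unfolding fh_def lh_def by auto
  then have "bdi w ! 1 = hd (lh w)"
    unfolding bdi_def by (cases "fh w"; cases "lh w") auto
  also have "\<dots> = w ! (length w div 2)"
    unfolding lh_def using assms by (simp add: hd_drop_conv_nth)
  finally show ?thesis .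
qed

lemma bdi_last_two:
  assumes "even (length w)" "w \<noteq> []"
  shows "\<exists>r. bdi w = r @ [w ! (length w div 2 - 1), last w]"
proof -
  let ?h = "length w div 2"
  have h: "0 < ?h" using assms by (cases w) auto
  have "fh w = butlast (fh w) @ [w ! (?h - 1)]"
    using h assms(2) append_butlast_last_id[of "fh w"] last_conv_nth[of "fh w"]
    unfolding fh_def by simp
  moreover have "lh w = butlast (lh w) @ [last w]"
  proof -
    have "length w div 2 < length w" using assms(2) by simp
    then show ?thesis
      using append_butlast_last_id[of "lh w"] unfolding lh_def by (simp add: last_drop)
  qed
  moreover have "length (butlast (fh w)) = length (butlast (lh w))"
    using assms unfolding fh_def lh_def by auto
  ultimately have "bdi w = psh (butlast (fh w)) (butlast (lh w)) @ [w ! (?h - 1), last w]"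
    unfolding bdi_def by (metis psh.simps(1,2) psh_append)
  then show ?thesis by blast
qed

definition word :: "nat \<Rightarrow> nat \<Rightarrow> nat list" where
  "word m n = replicate m 0 @ replicate m 1 @ replicate (2 * n) 2 @ replicate (4 * n) 3"

lemma count_list_word:
  "count_list (word m n) 0 = m" "count_list (word m n) 1 = m"
  "count_list (word m n) 2 = 2 * n" "count_list (word m n) 3 = 4 * n"
  unfolding word_def by (simp_all add: count_list_eq_length_filter)

lemma length_word: "length (word m n) = 2 * m + 6 * n"
  unfolding word_def by simp

lemma last_word: "1 \<le> n \<Longrightarrow> last (word m n) = 3"
  unfolding word_def by simp

lemma word_nth_eq_3:
  assumes "i < length (word m n)"
  shows "word m n ! i = 3 \<longleftrightarrow> 2 * m + 2 * n \<le> i"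
proof -
  define X :: "nat list" where "X = replicate m 0 @ replicate m 1 @ replicate (2 * n) 2"
  have "word m n = X @ replicate (4 * n) 3" "length X = 2 * m + 2 * n" "3 \<notin> set X"
    unfolding word_def X_def by auto
  moreover have "X ! i \<noteq> 3" if "i < length X"
    using that \<open>3 \<notin> set X\<close> nth_mem by metis
  ultimately show ?thesis
    using assms by (auto simp: nth_append)
qed

(* On the diagonal m = n, the halves are 0^n 1^n 2^(2n) and 3^(4n). *)
lemma bdi_word_diag: "bdi (word n n) = pow [0, 3] n @ pow [1, 3] n @ pow [2, 3] (2 * n)"
proof -
  define X :: "nat list" where "X = replicate n 0 @ replicate n 1 @ replicate (2 * n) 2"
  have "word n n = X @ replicate (4 * n) 3" "length X = 4 * n"
    unfolding word_def X_def by simp_all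
  then have "fh (word n n) = X" "lh (word n n) = replicate n 3 @ replicate n 3 @ replicate (2 * n) 3"
    unfolding fh_def lh_def by (simp_all add: replicate_add[symmetric])
  then show ?thesis
    unfolding bdi_def X_def by (simp add: psh_append psh_replicate)
qed

(* For n < m the last half of word m n starts before the 3s, ... *)
lemma bdi_word_nth_1: "n < m \<Longrightarrow> bdi (word m n) ! 1 \<noteq> 3"
  using bdi_nth_1[of "word m n"] word_nth_eq_3[of "m + 3 * n" m n]
  by (simp add: length_word)

(* ... while for m < n the first half already ends inside the 3s. *)
lemma bdi_word_last_two:
  assumes "m < n"
  shows "\<exists>r. bdi (word m n) = r @ [3, 3]"
proof -
  have "word m n ! (length (word m n) div 2 - 1) = 3"
    using assms word_nth_eq_3[of "m + 3 * n - 1" m n] by (simp add: length_word)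
  moreover have "last (word m n) = 3" using assms by (simp add: last_word)
  moreover have "even (length (word m n))" "word m n \<noteq> []"
    using assms length_word[of m n] by auto
  ultimately show ?thesis using bdi_last_two[of "word m n"] by simp
qed

lemma window_starts_before:
  assumes "z = u @ mid @ y" "z = A @ R" "c \<in> set mid" "c \<notin> set R"
  shows "length u < length A"
proof (rule ccontr)
  assume "\<not> length u < length A"
  then have "set (drop (length u) z) \<subseteq> set R"
    using set_drop_subset_set_drop[of "length A" "length u" z] assms(2) by simp
  moreover have "set mid \<subseteq> set (drop (length u) z)"
    using assms(1) by simp
  ultimately show False using assms(3,4) by blast
qed

lemma window_ends_after:
  assumes "z = u @ mid @ y" "z = L @ C" "c \<in> set mid" "c \<notin> set L"
  shows "length L < length u + length mid"
proof (rule ccontr)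
  assume "\<not> length L < length u + length mid"
  then have "set (take (length u + length mid) z) \<subseteq> set L"
    using set_take_subset_set_take[of "length u + length mid" "length L" z] assms(2) by simp
  moreover have "set mid \<subseteq> set (take (length u + length mid) z)"
    using assms(1) by simp
  ultimately show False using assms(3,4) by blast
qed

lemma suffix_of_length_2:
  assumes "xs @ ys = zs @ [a, b]" "2 \<le> length ys"
  shows "\<exists>r. ys = r @ [a, b]"
proof -
  have "drop (length ys - 2) ys = drop (length (xs @ ys) - 2) (xs @ ys)"
    using assms(2) by simp
  also have "\<dots> = [a, b]"
    unfolding assms(1) by simp
  finally show ?thesis by (metis append_take_drop_id)
qed

lemma diag_ends:
  assumes "1 \<le> N"
  shows "bdi (word N N) ! 1 = 3" and "\<exists>r. bdi (word N N) = r @ [2, 3]"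
proof -
  obtain N' where N: "N = Suc N'" using assms by (cases N) auto
  show "bdi (word N N) ! 1 = 3"
    unfolding bdi_word_diag N by (simp add: pow_Suc)
  have "2 * N = Suc (2 * N' + 1)" using N by simp
  then show "\<exists>r. bdi (word N N) = r @ [2, 3]"
    unfolding bdi_word_diag by (simp only: pow_Suc_right) auto
qed

(* In bdi (word N N) the 0s lie before position 2N and the 2s from position 4N on, so a
   window containing a 0 starts early and a window containing a 2 ends late. *)
lemma diag_window:
  assumes z: "bdi (word N N) = u @ mid @ y"
  shows "0 \<in> set mid \<Longrightarrow> length u < 2 * N"
    and "2 \<in> set mid \<Longrightarrow> 4 * N < length u + length mid"
proof -
  have "0 \<notin> set (pow [1, 3::nat] N @ pow [2, 3] (2 * N))"
    using set_pow[of "[1, 3::nat]" N] set_pow[of "[2, 3::nat]" "2 * N"] by auto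
  then show "length u < 2 * N" if "0 \<in> set mid"
    using window_starts_before[OF z bdi_word_diag that] by (simp add: length_pow)
  have no_2: "2 \<notin> set (pow [0, 3::nat] N @ pow [1, 3] N)"
    using set_pow[of "[0, 3::nat]" N] set_pow[of "[1, 3::nat]" N] by auto
  have split: "bdi (word N N) = (pow [0, 3] N @ pow [1, 3] N) @ pow [2, 3] (2 * N)"
    using bdi_word_diag by simp
  show "4 * N < length u + length mid" if "2 \<in> set mid"
    using window_ends_after[OF z split that no_2] by (simp add: length_pow)
qed

lemma pumped_diag_counts:
  assumes z: "bdi (word N N) = u @ v @ w @ x @ y" and pumped: "u @ w @ y = bdi (word m n)"
    and nonempty: "v @ x \<noteq> []"
  shows "m + count_list (v @ x) 0 = N" "2 * n + count_list (v @ x) 2 = 2 * N" "2 * m + 6 * n < 8 * N"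
proof -
  have count: "count_list (word m n) c + count_list (v @ x) c = count_list (word N N) c" for c
    using arg_cong[OF z, of "\<lambda>s. count_list s c"] arg_cong[OF pumped, of "\<lambda>s. count_list s c"]
    unfolding count_list_bdi by simp
  show "m + count_list (v @ x) 0 = N" "2 * n + count_list (v @ x) 2 = 2 * N"
    using count[of 0] count[of 2] by (simp_all add: count_list_word)
  have "0 < length v + length x" using nonempty by auto
  moreover have "8 * N = length u + length v + length w + length x + length y"
    using arg_cong[OF z, of length] by (simp add: length_bdi length_word)
  moreover have "2 * m + 6 * n = length u + length w + length y"
    using arg_cong[OF pumped, of length] by (simp add: length_bdi length_word)
  ultimately show "2 * m + 6 * n < 8 * N" by linarith
qed

(* By the letter counts, if m = n the window removes both 0s and 2s,
   which lie more than N apart; if n < m it removes 2s, so the window lies far to the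
   right and the second letter 3 survives, unlike in bdi (word m n); if m < n it
   removes 0s, so the window lies far to the left and the ending 2 3 survives, while
   bdi (word m n) ends with 3 3. *)
lemma pumped_diag_not_bdi_word:
  assumes z: "bdi (word N N) = u @ v @ w @ x @ y"
    and nonempty: "v @ x \<noteq> []" and short: "length (v @ w @ x) < N" and "1 \<le> n"
  shows "u @ w @ y \<noteq> bdi (word m n)"
proof
  assume pumped: "u @ w @ y = bdi (word m n)"
  let ?z = "bdi (word N N)" and ?mid = "v @ w @ x"
  have N: "1 \<le> N" using short by simp
  have z_mid: "?z = u @ ?mid @ y" using z by simp
  note counts = pumped_diag_counts[OF z pumped nonempty]
  have in_mid: "c \<in> set ?mid" if "0 < count_list (v @ x) c" for c
    using that by (auto simp: count_list_0_iff[symmetric])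
  note zero = diag_window(1)[OF z_mid in_mid] and two = diag_window(2)[OF z_mid in_mid]
  consider "n < m" | "m = n" | "m < n" by linarith
  then show False
  proof cases
    case 1
    then have "2 \<le> length u" using counts two short by fastforce
    then have "bdi (word m n) ! 1 = ?z ! 1"
      unfolding z_mid pumped[symmetric] by (simp add: nth_append)
    then show False using bdi_word_nth_1[OF 1] diag_ends(1)[OF N] by simp
  next
    case 2
    then show False using counts zero two short by fastforce
  next
    case 3
    then have "length u < 2 * N" using counts zero by fastforce
    moreover have "length ?z = length u + length ?mid + length y" using z_mid by simp
    ultimately have y_long: "2 \<le> length y" using short by (simp add: length_bdi length_word)
    obtain r where "?z = r @ [2, 3]" using diag_ends(2)[OF N] by blast
    then have "(u @ ?mid) @ y = r @ [2, 3]" using z_mid by simp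
    from suffix_of_length_2[OF this y_long] obtain r' where "y = r' @ [2, 3]" by (elim exE)
    moreover from bdi_word_last_two[OF 3] obtain r'' where "bdi (word m n) = r'' @ [3, 3]" by (elim exE)
    ultimately have "(u @ w @ r') @ [2, 3] = r'' @ [3, 3::nat]" using pumped by simp
    then show False using arg_cong[of _ _ "\<lambda>l. last (butlast l)"] by fastforce
  qed
qed

(* Pumping down bdi (word N N) for N beyond the pumping constant leaves bdi(L). *)
theorem bdi_words_not_context_free:
  "\<not> context_free (bdi ` {word m n | m n. 1 \<le> m \<and> 1 \<le> n})" (is "\<not> context_free ?K")
proof
  assume "context_free ?K"
  then obtain p where pump: "\<forall>z \<in> ?K. p < length z \<longrightarrow>
      (\<exists>u v w x y. z = u @ v @ w @ x @ y \<and> v @ x \<noteq> [] \<and> length (v @ w @ x) \<le> p \<and> u @ w @ y \<in> ?K)"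
    by (rule context_free_pumping_down)
  let ?N = "Suc p"
  have "bdi (word ?N ?N) \<in> ?K" by (intro imageI) auto
  moreover have "p < length (bdi (word ?N ?N))" by (simp add: length_bdi length_word)
  ultimately have "\<exists>u v w x y. bdi (word ?N ?N) = u @ v @ w @ x @ y \<and> v @ x \<noteq> []
      \<and> length (v @ w @ x) \<le> p \<and> u @ w @ y \<in> ?K"
    by (rule pump[rule_format])
  then obtain u v w x y where z: "bdi (word ?N ?N) = u @ v @ w @ x @ y"
      and "v @ x \<noteq> []" "length (v @ w @ x) \<le> p" "u @ w @ y \<in> ?K"
    by (elim exE conjE)
  then obtain m n where "1 \<le> n" "u @ w @ y = bdi (word m n)" by blast
  moreover have "length (v @ w @ x) < ?N" using \<open>length (v @ w @ x) \<le> p\<close> by simp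
  ultimately show False
    using pumped_diag_not_bdi_word[OF z \<open>v @ x \<noteq> []\<close>] by blast
qed

definition nest_prods :: "'n \<Rightarrow> 't list \<Rightarrow> 't list \<Rightarrow> ('n, 't) prods" where
  "nest_prods A x y = {(A, map Inr x @ [Inl A] @ map Inr y), (A, map Inr (x @ y))}"

lemma trees_of_terminals: "map root ts = map Inr w \<Longrightarrow> ts = map Leaf w"
proof (induction ts arbitrary: w)
  case (Cons t ts)
  then show ?case by (cases t) auto
qed simp

lemma nest_tree_exists:
  assumes "nest_prods A x y \<subseteq> P"
  shows "\<exists>t. parse_tree P t \<and> root t = Inl A \<and> yield t = pow x (Suc k) @ pow y (Suc k)"
proof (induction k)
  case 0
  have "parse_tree P (Node A (map Leaf (x @ y)))"
    using assms unfolding nest_prods_def by (auto simp: comp_def)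
  then show ?case
    by (intro exI[of _ "Node A (map Leaf (x @ y))"]) (simp add: comp_def pow_Suc)
next
  case (Suc k)
  then obtain t where t: "parse_tree P t" "root t = Inl A" "yield t = pow x (Suc k) @ pow y (Suc k)"
    by (elim exE conjE)
  let ?t = "Node A (map Leaf x @ [t] @ map Leaf y)"
  have "parse_tree P ?t"
    using assms t unfolding nest_prods_def by (auto simp: comp_def)
  moreover have "yield ?t = x @ (pow x (Suc k) @ pow y (Suc k)) @ y"
    using t(3) by (simp add: comp_def)
  moreover have "\<dots> = pow x (Suc (Suc k)) @ pow y (Suc (Suc k))"
    using pow_Suc[of x "Suc k"] pow_Suc_right[of y "Suc k"] by simp
  ultimately show ?case by (intro exI[of _ ?t]) simp
qed

lemma nest_tree_yield:
  assumes "parse_tree P t" "root t = Inl A"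
    and only_nest: "\<forall>rhs. (A, rhs) \<in> P \<longrightarrow> (A, rhs) \<in> nest_prods A x y"
  shows "\<exists>k. yield t = pow x (Suc k) @ pow y (Suc k)"
  using assms(1,2)
proof (induction t)
  case (Leaf a)
  then show ?case by simp
next
  case (Node B ts)
  then have B: "B = A" and ts: "(A, map root ts) \<in> nest_prods A x y"
    using only_nest by auto
  show ?case
  proof (cases "map root ts = map Inr (x @ y)")
    case True
    then show ?thesis
      using B trees_of_terminals[OF True] by (intro exI[of _ 0]) (simp add: comp_def pow_Suc)
  next
    case False
    then have "map root ts = map Inr x @ [Inl A] @ map Inr y"
      using ts unfolding nest_prods_def by simp
    then obtain ts1 t ts2 where split: "ts = ts1 @ t # ts2" "map root ts1 = map Inr x"
        "root t = Inl A" "map root ts2 = map Inr y"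
      by (auto simp: map_eq_append_conv)
    obtain k where "yield t = pow x (Suc k) @ pow y (Suc k)"
      using Node split by auto
    moreover have "ts1 = map Leaf x" "ts2 = map Leaf y"
      using split(2,4) by (simp_all add: trees_of_terminals)
    ultimately have "yield (Node B ts) = x @ (pow x (Suc k) @ pow y (Suc k)) @ y"
      using split(1) by (simp add: comp_def)
    also have "\<dots> = pow x (Suc (Suc k)) @ pow y (Suc (Suc k))"
      using pow_Suc[of x "Suc k"] pow_Suc_right[of y "Suc k"] by simp
    finally show ?thesis ..
  qed
qed

lemma word_as_nests: "word m n = (pow [0] m @ pow [1] m) @ (pow [2, 2] n @ pow [3, 3, 3, 3] n)"
proof -
  have "[2, 2] = replicate 2 (2::nat)" "[3, 3, 3, 3] = replicate 4 (3::nat)"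
    by (simp_all add: numeral_eq_Suc)
  then show ?thesis
    unfolding word_def by (simp add: pow_singleton pow_replicate mult.commute)
qed

(* A grammar for L: S -> A B, A -> 0 A 1 | 0 1, B -> 22 B 3333 | 22 3333. *)
definition L_grammar :: "(nat, nat) prods" where
  "L_grammar = insert (0, [Inl 1, Inl 2]) (nest_prods 1 [0] [1] \<union> nest_prods 2 [2, 2] [3, 3, 3, 3])"

lemma cfg_lang_L_grammar: "cfg_lang L_grammar 0 = {word m n | m n. 1 \<le> m \<and> 1 \<le> n}"
proof (intro set_eqI iffI)
  fix z assume "z \<in> cfg_lang L_grammar 0"
  then obtain t where t: "parse_tree L_grammar t" "root t = Inl 0" "yield t = z"
    unfolding cfg_lang_iff_parse_tree by (elim exE conjE)
  then obtain ts where "t = Node 0 ts" by (cases t) auto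
  with t(1) have "map root ts = [Inl 1, Inl 2]" "\<forall>s \<in> set ts. parse_tree L_grammar s"
    by (auto simp: L_grammar_def nest_prods_def)
  then obtain t1 t2 where ts: "ts = [t1, t2]" "root t1 = Inl 1" "root t2 = Inl 2"
      "parse_tree L_grammar t1" "parse_tree L_grammar t2"
    by (auto simp: map_eq_Cons_conv)
  have "\<forall>rhs. (1, rhs) \<in> L_grammar \<longrightarrow> (1, rhs) \<in> nest_prods 1 [0] [1]"
    "\<forall>rhs. (2, rhs) \<in> L_grammar \<longrightarrow> (2, rhs) \<in> nest_prods 2 [2, 2] [3, 3, 3, 3]"
    by (auto simp: L_grammar_def nest_prods_def)
  from nest_tree_yield[OF ts(4,2) this(1)] nest_tree_yield[OF ts(5,3) this(2)]
  obtain j k where "yield t1 = pow [0] (Suc j) @ pow [1] (Suc j)"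
      "yield t2 = pow [2, 2] (Suc k) @ pow [3, 3, 3, 3] (Suc k)"
    by (elim exE)
  then have "z = word (Suc j) (Suc k)"
    using t(3) \<open>t = Node 0 ts\<close> ts(1) by (simp add: word_as_nests)
  then show "z \<in> {word m n | m n. 1 \<le> m \<and> 1 \<le> n}" by auto
next
  fix z assume "z \<in> {word m n | m n. 1 \<le> m \<and> 1 \<le> n}"
  then obtain m n where "z = word m n" "1 \<le> m" "1 \<le> n" by blast
  then obtain j k where z: "z = word (Suc j) (Suc k)"
    by (cases m; cases n) auto
  have "nest_prods 1 [0] [1] \<subseteq> L_grammar" "nest_prods 2 [2, 2] [3, 3, 3, 3] \<subseteq> L_grammar"
    unfolding L_grammar_def by blast+
  from nest_tree_exists[OF this(1), of j] nest_tree_exists[OF this(2), of k]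
  obtain t1 t2 where t1: "parse_tree L_grammar t1" "root t1 = Inl 1"
      "yield t1 = pow [0] (Suc j) @ pow [1] (Suc j)"
    and t2: "parse_tree L_grammar t2" "root t2 = Inl 2"
      "yield t2 = pow [2, 2] (Suc k) @ pow [3, 3, 3, 3] (Suc k)"
    by (elim exE conjE)
  have "parse_tree L_grammar (Node 0 [t1, t2])"
    using t1 t2 by (simp add: L_grammar_def)
  then show "z \<in> cfg_lang L_grammar 0"
    unfolding cfg_lang_iff_parse_tree using t1 t2 z
    by (intro exI[of _ "Node 0 [t1, t2]"]) (simp add: word_as_nests)
qed

lemma finite_L_grammar: "finite L_grammar"
  unfolding L_grammar_def nest_prods_def by simp

lemma words_context_free: "context_free {word m n | m n. 1 \<le> m \<and> 1 \<le> n}"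
  unfolding context_free_def
  by (intro exI[of _ L_grammar] exI[of _ 0]) (simp add: cfg_lang_L_grammar finite_L_grammar)

(* Letter counts identify bdi(L) inside (03)^+ (13)^+ (23)^+. *)
lemma bdi_words_inter_shuffles:
  "bdi ` {word m n | m n. 1 \<le> m \<and> 1 \<le> n}
     \<inter> {pow [0, 3] a @ pow [1, 3] b @ pow [2, 3] c | a b c. 1 \<le> a \<and> 1 \<le> b \<and> 1 \<le> c}
   = {pow [0, 3] n @ pow [1, 3] n @ pow [2, 3] (2 * n) | n. 1 \<le> n}"
proof (intro set_eqI iffI)
  fix s :: "nat list"
  assume "s \<in> bdi ` {word m n | m n. 1 \<le> m \<and> 1 \<le> n}
     \<inter> {pow [0, 3] a @ pow [1, 3] b @ pow [2, 3] c | a b c. 1 \<le> a \<and> 1 \<le> b \<and> 1 \<le> c}"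
  then obtain m n a b c where s: "s = bdi (word m n)" "1 \<le> n"
      "s = pow [0, 3] a @ pow [1, 3] b @ pow [2, 3] c"
    by blast
  have "count_list (pow [0, 3] a @ pow [1, 3] b @ pow [2, 3] c) i = count_list (word m n) i" for i
    using s(1,3) count_list_bdi[of "word m n"] by simp
  from this[of 0] this[of 1] this[of 2] this[of 3] have "a = n" "b = n" "c = 2 * n"
    by (simp_all add: count_list_pow count_list_word count_list_word(2)[unfolded One_nat_def])
  then show "s \<in> {pow [0, 3] n @ pow [1, 3] n @ pow [2, 3] (2 * n) | n. 1 \<le> n}"
    using s(2,3) by blast
next
  fix s :: "nat list"
  assume "s \<in> {pow [0, 3] n @ pow [1, 3] n @ pow [2, 3] (2 * n) | n. 1 \<le> n}"
  then obtain n where "s = bdi (word n n)" "1 \<le> n"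
    using bdi_word_diag by auto
  then show "s \<in> bdi ` {word m n | m n. 1 \<le> m \<and> 1 \<le> n}
     \<inter> {pow [0, 3] a @ pow [1, 3] b @ pow [2, 3] c | a b c. 1 \<le> a \<and> 1 \<le> b \<and> 1 \<le> c}"
    using bdi_word_diag by fastforce
qed

theorem mainTheorem14:
  fixes L :: "nat list set"
  defines "L \<equiv> {pow [0] m @ pow [1] m @ pow [2] (2*n) @ pow [3] (4*n) | m n. m \<ge> 1 \<and> n \<ge> 1}"
  shows "context_free L
     \<and> bdi_lang L \<inter> {pow [0,3] a @ pow [1,3] b @ pow [2,3] c | a b c. a \<ge> 1 \<and> b \<ge> 1 \<and> c \<ge> 1}
         = {pow [0,3] n @ pow [1,3] n @ pow [2,3] (2*n) | n. n \<ge> 1}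
     \<and> \<not> context_free (bdi_lang L)
     \<and> \<not> (\<forall>K :: nat list set. context_free K \<longrightarrow> context_free (bdi_lang K))"
proof -
  have L_words: "L = {word m n | m n. 1 \<le> m \<and> 1 \<le> n}"
    unfolding L_def word_def pow_singleton by simp
  have "context_free L"
    unfolding L_words by (rule words_context_free)
  moreover have "\<not> context_free (bdi_lang L)"
    unfolding bdi_lang_def L_words by (rule bdi_words_not_context_free)
  moreover have "bdi_lang L \<inter> {pow [0,3] a @ pow [1,3] b @ pow [2,3] c | a b c. a \<ge> 1 \<and> b \<ge> 1 \<and> c \<ge> 1}
         = {pow [0,3] n @ pow [1,3] n @ pow [2,3] (2*n) | n. n \<ge> 1}"
    unfolding bdi_lang_def L_words by (rule bdi_words_inter_shuffles)
  ultimately show ?thesis by blast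
qed

end
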